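(* Let $p,q,r\in(0,1)$ with $p+q+r=1$. Let $X_1,\eta_2,\eta_3,\ldots$ be independent random variables, each taking the values $1,-1,0$ with probabilities $p,q,r$ respectively, and let $K_3,K_4,\ldots$ be independent random variables, independent of the previous ones, with $K_{n+1}$ uniformly distributed on $\{1,n\}$. Set $X_2=\eta_2X_1$, $X_{n+1}=\eta_{n+1}X_{K_{n+1}}$ for $n\ge2$, and $S_n=\sum_{k=1}^nX_k$. Then, as $n\to\infty$, $S_n/n$ converges in distribution to a random variable $S$ taking the value $\frac{p-q}{2+q-p}$ with probability $p$, the value $0$ with probability $r$, and the value $-\frac{p-q}{2+q-p}$ with probability $q$. Moreover, for every real $\alpha>0$, $E|S_n/n|^\alpha\to E|S|^\alpha$, and for every positive integer $k$, $E\big((S_n/n)^k\big)\to E(S^k)$, as $n\to\infty$.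
   Context: This is the elephant random walk with delays in which the elephant remembers only the first step and the most recent step: step $n+1$ ($n\ge2$) picks one of $X_1,X_n$ uniformly at random and repeats it (probability $p$), reverses it (probability $q$), or is $0$ (probability $r$). Note that $|S_n/n|\le1$ for all $n$. *)

theory Defs
  imports "HOL-Probability.Probability"
begin

text \<open>The step X_n is defined literally as eta_n times X_(K_n); since K_(n+1) takes values in {1,n}
  almost surely, the guard below only matters on a null set (where we put 0).\<close>

function erw_step :: "('a \<Rightarrow> real) \<Rightarrow> (nat \<Rightarrow> 'a \<Rightarrow> real) \<Rightarrow> (nat \<Rightarrow> 'a \<Rightarrow> nat) \<Rightarrow> nat \<Rightarrow> 'a \<Rightarrow> real"
  where
  "erw_step X1 eta K n \<omega> =
     (if n = 0 then 0
      else if n = 1 then X1 \<omega>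
      else if n = 2 then eta 2 \<omega> * X1 \<omega>
      else eta n \<omega> * (if 1 \<le> K n \<omega> \<and> K n \<omega> < n then erw_step X1 eta K (K n \<omega>) \<omega> else 0))"
  by pat_completeness auto
termination
  by (relation "Wellfounded.measure (\<lambda>(_, _, _, n, _). n)") auto

declare erw_step.simps [simp del]

definition erw_sum :: "('a \<Rightarrow> real) \<Rightarrow> (nat \<Rightarrow> 'a \<Rightarrow> real) \<Rightarrow> (nat \<Rightarrow> 'a \<Rightarrow> nat) \<Rightarrow> nat \<Rightarrow> 'a \<Rightarrow> real"
  where "erw_sum X1 eta K n \<omega> = (\<Sum>k=1..n. erw_step X1 eta K k \<omega>)"

text \<open>Independence is expressed for the whole family via a sum-type valued index/value.\<close>

definition erw_hyps :: "'a measure \<Rightarrow> real \<Rightarrow> real \<Rightarrow> real \<Rightarrow> ('a \<Rightarrow> real) \<Rightarrow> (nat \<Rightarrow> 'a \<Rightarrow> real) \<Rightarrow> (nat \<Rightarrow> 'a \<Rightarrow> nat) \<Rightarrow> bool"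
  where
  "erw_hyps M p q r X1 eta K \<longleftrightarrow>
     prob_space M \<and>
     X1 \<in> measurable M (count_space UNIV) \<and>
     (\<forall>n\<ge>2. eta n \<in> measurable M (count_space UNIV)) \<and>
     (\<forall>n\<ge>3. K n \<in> measurable M (count_space UNIV)) \<and>
     measure M {\<omega>\<in>space M. X1 \<omega> = 1} = p \<and>
     measure M {\<omega>\<in>space M. X1 \<omega> = -1} = q \<and>
     measure M {\<omega>\<in>space M. X1 \<omega> = 0} = r \<and>
     (\<forall>n\<ge>2. measure M {\<omega>\<in>space M. eta n \<omega> = 1} = p \<and>
             measure M {\<omega>\<in>space M. eta n \<omega> = -1} = q \<and>
             measure M {\<omega>\<in>space M. eta n \<omega> = 0} = r) \<and>
     (\<forall>n\<ge>2. measure M {\<omega>\<in>space M. K (n+1) \<omega> = 1} = 1/2 \<and>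
             measure M {\<omega>\<in>space M. K (n+1) \<omega> = n} = 1/2) \<and>
     prob_space.indep_vars M (\<lambda>_. count_space UNIV)
       (\<lambda>i \<omega>. (case i of Inl n \<Rightarrow> Inl (if n = 1 then X1 \<omega> else eta n \<omega>)
                       | Inr n \<Rightarrow> Inr (K n \<omega>)) :: real + nat)
       (Inl ` {1::nat..} \<union> Inr ` {3::nat..})"

definition erw_limit_pmf :: "real \<Rightarrow> real \<Rightarrow> real \<Rightarrow> real pmf" where
  "erw_limit_pmf p q r =
     pmf_of_list [((p - q) / (2 + q - p), p), (0, r), (- ((p - q) / (2 + q - p)), q)]"

end

theory Submission
  imports Defs
begin

text \<open>Since K_n \<in> {1, n - 1}, every step is the first one times a product of signs: X_n = X_1 W_n,
  where W_1 = 1 and W_n is \<eta>_n or \<eta>_n W_(n-1) according as K_n = 1 or not. Given the past, W_n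
  has mean \<mu>/2 (1 + W_(n-1)) with \<mu> = p - q, so the deviation of W_n from the fixed point
  c = \<mu>/(2 - \<mu>) of w \<mapsto> \<mu>/2 (1 + w) has conditional mean \<mu>/2 (W_(n-1) - c). As |\<mu>/2| \<le> 1/2,
  this keeps the cross terms of E (\<Sum>k\<le>n. W_k - c)^2 bounded, so that second moment is O(n) and
  S_n/n \<rightarrow> c X_1 in L^2. Because |S_n/n| \<le> 1, this gives convergence of E f(S_n/n) for every f
  continuous on [-1, 1], and c X_1 has the law of S.\<close>

lemma (in prob_space) AE_in_finite_values:
  assumes X: "X \<in> measurable M (count_space UNIV)" and A: "finite A"
    and total: "(\<Sum>a\<in>A. prob {\<omega>\<in>space M. X \<omega> = a}) = 1"
  shows "AE \<omega> in M. X \<omega> \<in> A"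
proof -
  have "prob {\<omega>\<in>space M. X \<omega> \<in> A} = (\<Sum>a\<in>A. prob {\<omega>\<in>space M. X \<omega> = a})"
    using A by (intro prob_sum measurable_sets_Collect[OF X]) auto
  with total have "AE \<omega> in M. \<omega> \<in> {\<omega>\<in>space M. X \<omega> \<in> A}"
    by (intro AE_prob_1) simp
  then show ?thesis
    by eventually_elim simp
qed

lemma (in prob_space) expectation_finite_values:
  fixes g :: "'b \<Rightarrow> real"
  assumes X: "X \<in> measurable M (count_space UNIV)" and A: "finite A"
    and ae_in: "AE \<omega> in M. X \<omega> \<in> A"
  shows "expectation (\<lambda>\<omega>. g (X \<omega>)) = (\<Sum>a\<in>A. g a * prob {\<omega>\<in>space M. X \<omega> = a})"
proof -
  note X[measurable]
  have events: "{\<omega>\<in>space M. X \<omega> = a} \<in> events" for a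
    by measurable
  have "expectation (\<lambda>\<omega>. g (X \<omega>)) =
      expectation (\<lambda>\<omega>. \<Sum>a\<in>A. g a * indicator {\<omega>\<in>space M. X \<omega> = a} \<omega>)"
  proof (rule integral_cong_AE)
    show "AE \<omega> in M. g (X \<omega>) = (\<Sum>a\<in>A. g a * indicator {\<omega>\<in>space M. X \<omega> = a} \<omega>)"
      using ae_in AE_space
    proof eventually_elim
      case (elim \<omega>)
      then show ?case
        by (auto simp: sum.remove[OF A elim(1)] indicator_def intro!: sum.neutral)
    qed
  qed (rule measurable_compose[OF X], simp, measurable)
  also have "\<dots> = (\<Sum>a\<in>A. g a * prob {\<omega>\<in>space M. X \<omega> = a})"
    by (subst Bochner_Integration.integral_sum) (auto simp: events less_top[symmetric])
  finally show ?thesis .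
qed

lemma integral_pmf_of_list:
  fixes f :: "'a \<Rightarrow> real"
  assumes wf: "pmf_of_list_wf xs"
  shows "measure_pmf.expectation (pmf_of_list xs) f = (\<Sum>(x, w)\<leftarrow>xs. f x * w)"
proof -
  have pmf_eq: "pmf (pmf_of_list xs) a =
      (\<Sum>i<length xs. if fst (xs ! i) = a then snd (xs ! i) else 0)" for a
    unfolding pmf_pmf_of_list[OF wf] sum_list_map_filter'
    by (simp add: sum_list_sum_nth atLeast0LessThan)
  have "measure_pmf.expectation (pmf_of_list xs) f =
      (\<Sum>a\<in>set (map fst xs). f a * pmf (pmf_of_list xs) a)"
    using wf by (intro integral_measure_pmf_real) (auto dest: set_pmf_of_list[THEN subsetD])
  also have "\<dots> = (\<Sum>i<length xs. \<Sum>a\<in>set (map fst xs).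
      if fst (xs ! i) = a then f a * snd (xs ! i) else 0)"
    by (subst sum.swap) (simp add: pmf_eq sum_distrib_left if_distrib cong: if_cong)
  also have "\<dots> = (\<Sum>(x, w)\<leftarrow>xs. f x * w)"
    by (simp add: sum.delta sum_list_sum_nth atLeast0LessThan case_prod_unfold)
  finally show ?thesis .
qed

definition bounded_rv :: "'a measure \<Rightarrow> ('a \<Rightarrow> real) \<Rightarrow> bool" where
  "bounded_rv M f \<longleftrightarrow> f \<in> borel_measurable M \<and> (\<exists>B. \<forall>\<omega>. \<bar>f \<omega>\<bar> \<le> B)"

lemma bounded_rvI: "f \<in> borel_measurable M \<Longrightarrow> (\<And>\<omega>. \<bar>f \<omega>\<bar> \<le> B) \<Longrightarrow> bounded_rv M f"
  unfolding bounded_rv_def by blast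

lemma bounded_rv_const: "bounded_rv M (\<lambda>_. a)"
  by (rule bounded_rvI[where B="\<bar>a\<bar>"]) auto

lemma bounded_rv_add:
  assumes "bounded_rv M f" "bounded_rv M g"
  shows "bounded_rv M (\<lambda>\<omega>. f \<omega> + g \<omega>)"
proof -
  obtain A B where "\<And>\<omega>. \<bar>f \<omega>\<bar> \<le> A" "\<And>\<omega>. \<bar>g \<omega>\<bar> \<le> B"
    using assms unfolding bounded_rv_def by blast
  then have "\<bar>f \<omega> + g \<omega>\<bar> \<le> A + B" for \<omega>
    by (meson abs_triangle_ineq add_mono order_trans)
  with assms show ?thesis
    unfolding bounded_rv_def by auto
qed

lemma bounded_rv_mult:
  assumes "bounded_rv M f" "bounded_rv M g"
  shows "bounded_rv M (\<lambda>\<omega>. f \<omega> * g \<omega>)"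
proof -
  obtain A B where "\<And>\<omega>. \<bar>f \<omega>\<bar> \<le> A" "\<And>\<omega>. \<bar>g \<omega>\<bar> \<le> B"
    using assms unfolding bounded_rv_def by blast
  then have "\<bar>f \<omega> * g \<omega>\<bar> \<le> A * B" for \<omega>
    unfolding abs_mult by (meson abs_ge_zero mult_mono order_trans)
  with assms show ?thesis
    unfolding bounded_rv_def by auto
qed

lemma bounded_rv_diff:
  assumes "bounded_rv M f" "bounded_rv M g"
  shows "bounded_rv M (\<lambda>\<omega>. f \<omega> - g \<omega>)"
proof -
  have "bounded_rv M (\<lambda>\<omega>. f \<omega> + (-1) * g \<omega>)"
    by (intro bounded_rv_add bounded_rv_mult bounded_rv_const assms)
  then show ?thesis by simp
qed

lemma bounded_rv_sum: "(\<And>k. k \<in> I \<Longrightarrow> bounded_rv M (f k)) \<Longrightarrow> bounded_rv M (\<lambda>\<omega>. \<Sum>k\<in>I. f k \<omega>)"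
  by (induction I rule: infinite_finite_induct) (auto intro: bounded_rv_add bounded_rv_const)

lemma bounded_rv_power: "bounded_rv M f \<Longrightarrow> bounded_rv M (\<lambda>\<omega>. f \<omega> ^ n)"
  by (induction n) (auto intro: bounded_rv_const bounded_rv_mult)

lemmas bounded_rv_intros =
  bounded_rv_const bounded_rv_add bounded_rv_diff bounded_rv_mult bounded_rv_power bounded_rv_sum

lemma bounded_rv_compose:
  "bounded_rv N f \<Longrightarrow> g \<in> measurable M N \<Longrightarrow> bounded_rv M (\<lambda>\<omega>. f (g \<omega>))"
  unfolding bounded_rv_def by (auto intro: measurable_compose)

lemma bounded_rv_component:
  fixes h :: "'b \<Rightarrow> real"
  assumes "i \<in> A" "\<And>x. \<bar>h x\<bar> \<le> C"
  shows "bounded_rv (PiM A (\<lambda>_. count_space UNIV)) (\<lambda>v. h (v i))"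
  using assms
  by (intro bounded_rvI[where B=C] measurable_compose[OF measurable_component_singleton]) auto

lemma (in finite_measure) integrable_bounded_rv:
  assumes "bounded_rv M f"
  shows "integrable M f"
proof -
  obtain B where "f \<in> borel_measurable M" "\<And>\<omega>. \<bar>f \<omega>\<bar> \<le> B"
    using assms unfolding bounded_rv_def by blast
  then show ?thesis by (intro integrable_const_bound[where B=B]) auto
qed

lemma (in prob_space) abs_expectation_le:
  assumes "bounded_rv M f" "\<And>\<omega>. \<bar>f \<omega>\<bar> \<le> B"
  shows "\<bar>expectation f\<bar> \<le> B"
proof -
  have "\<bar>expectation f\<bar> \<le> expectation (\<lambda>\<omega>. \<bar>f \<omega>\<bar>)"
    using integral_norm_bound[of M f] by simp
  also have "\<dots> \<le> expectation (\<lambda>_. B)"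
    using assms by (intro integral_mono integrable_bounded_rv) (auto simp: bounded_rv_def)
  finally show ?thesis
    by (simp add: prob_space)
qed

lemma (in prob_space) expectation_mult_indep_restrict:
  fixes f g :: "('i \<Rightarrow> 'b) \<Rightarrow> real"
  assumes indep: "indep_vars M' X I" and disjoint: "A \<inter> B = {}" "A \<subseteq> I" "B \<subseteq> I"
    and f: "f \<in> borel_measurable (PiM A M')" and g: "g \<in> borel_measurable (PiM B M')"
    and "integrable M (\<lambda>\<omega>. f (restrict (\<lambda>i. X i \<omega>) A))"
    and "integrable M (\<lambda>\<omega>. g (restrict (\<lambda>i. X i \<omega>) B))"
  shows "expectation (\<lambda>\<omega>. f (restrict (\<lambda>i. X i \<omega>) A) * g (restrict (\<lambda>i. X i \<omega>) B)) =
    expectation (\<lambda>\<omega>. f (restrict (\<lambda>i. X i \<omega>) A)) * expectation (\<lambda>\<omega>. g (restrict (\<lambda>i. X i \<omega>) B))"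
  using assms by (intro indep_var_lebesgue_integral
      indep_var_compose[unfolded comp_def, OF indep_var_restrict[OF indep disjoint] f g])

section \<open>Expectations along L^2-convergent sequences\<close>

lemma uniformly_continuous_quadratic_modulus:
  fixes f :: "real \<Rightarrow> real"
  assumes S: "compact S" and f: "continuous_on S f" and "\<epsilon> > 0"
  obtains C where "C \<ge> 0" "\<And>y z. y \<in> S \<Longrightarrow> z \<in> S \<Longrightarrow> \<bar>f y - f z\<bar> \<le> \<epsilon> + C * (y - z)\<^sup>2"
proof -
  obtain B where "B > 0" and B: "\<And>x. x \<in> S \<Longrightarrow> \<bar>f x\<bar> \<le> B"
    using compact_imp_bounded[OF compact_continuous_image[OF f S]] by (auto simp: bounded_pos)
  obtain \<delta> where \<delta>: "\<delta> > 0" and close: "\<And>y z. y \<in> S \<Longrightarrow> z \<in> S \<Longrightarrow> \<bar>y - z\<bar> < \<delta> \<Longrightarrow> \<bar>f y - f z\<bar> < \<epsilon>"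
    using compact_uniformly_continuous[OF f S] \<open>\<epsilon> > 0\<close>
    unfolding uniformly_continuous_on_def dist_real_def by metis
  define C where "C = 2 * B / \<delta>\<^sup>2"
  have "C \<ge> 0" using \<open>B > 0\<close> by (simp add: C_def)
  show ?thesis
  proof
    fix y z assume yz: "y \<in> S" "z \<in> S"
    show "\<bar>f y - f z\<bar> \<le> \<epsilon> + C * (y - z)\<^sup>2"
    proof (cases "\<bar>y - z\<bar> < \<delta>")
      case True
      have "0 \<le> C * (y - z)\<^sup>2"
        using \<open>C \<ge> 0\<close> by simp
      with close[OF yz True] show ?thesis
        by linarith
    next
      case False
      then have "\<delta>\<^sup>2 \<le> (y - z)\<^sup>2"
        using \<delta> by (metis abs_le_square_iff abs_of_pos not_less)
      then have "2 * B \<le> C * (y - z)\<^sup>2"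
        using \<delta> \<open>B > 0\<close> by (simp add: C_def field_simps)
      moreover have "\<bar>f y - f z\<bar> \<le> 2 * B"
        using B[OF yz(1)] B[OF yz(2)] by linarith
      ultimately show ?thesis using \<open>\<epsilon> > 0\<close> by linarith
    qed
  qed (rule \<open>C \<ge> 0\<close>)
qed

lemma (in prob_space) tendsto_expectation_of_L2_convergence:
  fixes Y :: "nat \<Rightarrow> 'a \<Rightarrow> real" and Z :: "'a \<Rightarrow> real" and f :: "real \<Rightarrow> real"
  assumes Y: "\<And>n. Y n \<in> borel_measurable M" and Z: "Z \<in> borel_measurable M"
    and S: "compact S" and Y_in: "AE \<omega> in M. \<forall>n. Y n \<omega> \<in> S" and Z_in: "AE \<omega> in M. Z \<omega> \<in> S"
    and L2: "(\<lambda>n. expectation (\<lambda>\<omega>. (Y n \<omega> - Z \<omega>)\<^sup>2)) \<longlonglongrightarrow> 0"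
    and f: "continuous_on S f" "f \<in> borel_measurable borel"
  shows "(\<lambda>n. expectation (\<lambda>\<omega>. f (Y n \<omega>))) \<longlonglongrightarrow> expectation (\<lambda>\<omega>. f (Z \<omega>))"
proof (rule tendstoI)
  fix \<epsilon> :: real assume "\<epsilon> > 0"
  obtain C where "C \<ge> 0"
    and modulus: "\<And>y z. y \<in> S \<Longrightarrow> z \<in> S \<Longrightarrow> \<bar>f y - f z\<bar> \<le> \<epsilon>/2 + C * (y - z)\<^sup>2"
    using uniformly_continuous_quadratic_modulus[OF S f(1), of "\<epsilon>/2"] \<open>\<epsilon> > 0\<close> by auto
  obtain Bf where Bf: "\<And>x. x \<in> S \<Longrightarrow> \<bar>f x\<bar> \<le> Bf"
    using compact_imp_bounded[OF compact_continuous_image[OF f(1) S]] by (auto simp: bounded_real)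
  obtain B where B: "\<And>x. x \<in> S \<Longrightarrow> \<bar>x\<bar> \<le> B"
    using compact_imp_bounded[OF S] by (auto simp: bounded_real)
  have int_f: "integrable M (\<lambda>\<omega>. f (X \<omega>))"
    if "X \<in> borel_measurable M" "AE \<omega> in M. X \<omega> \<in> S" for X
    using that(2) by (intro integrable_const_bound[where B=Bf] measurable_compose[OF that(1) f(2)])
      (auto elim!: AE_mp intro: Bf)
  have int_sq: "integrable M (\<lambda>\<omega>. (Y n \<omega> - Z \<omega>)\<^sup>2)" for n
  proof (rule integrable_const_bound[where B="(2 * B)\<^sup>2"])
    show "AE \<omega> in M. norm ((Y n \<omega> - Z \<omega>)\<^sup>2) \<le> (2 * B)\<^sup>2"
      using Y_in Z_in
    proof eventually_elim
      case (elim \<omega>)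
      then have "\<bar>Y n \<omega> - Z \<omega>\<bar> \<le> 2 * B"
        using B[of "Y n \<omega>"] B[of "Z \<omega>"] by auto
      then have "\<bar>Y n \<omega> - Z \<omega>\<bar>\<^sup>2 \<le> (2 * B)\<^sup>2"
        by (intro power_mono) auto
      then show ?case
        by simp
    qed
  qed (use Y Z in measurable)
  have int_Y: "integrable M (\<lambda>\<omega>. f (Y n \<omega>))" for n
    using Y_in by (intro int_f Y) (auto elim!: AE_mp)
  have "eventually (\<lambda>n. C * expectation (\<lambda>\<omega>. (Y n \<omega> - Z \<omega>)\<^sup>2) < \<epsilon>/2) sequentially"
    using tendsto_mult_right_zero[OF L2, of C] \<open>\<epsilon> > 0\<close> by (intro order_tendstoD(2)) auto
  then show "eventually (\<lambda>n. dist (expectation (\<lambda>\<omega>. f (Y n \<omega>))) (expectation (\<lambda>\<omega>. f (Z \<omega>))) < \<epsilon>)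
      sequentially"
  proof eventually_elim
    case (elim n)
    have "dist (expectation (\<lambda>\<omega>. f (Y n \<omega>))) (expectation (\<lambda>\<omega>. f (Z \<omega>))) =
        \<bar>expectation (\<lambda>\<omega>. f (Y n \<omega>) - f (Z \<omega>))\<bar>"
      using int_Y int_f[OF Z Z_in] by (simp add: dist_real_def)
    also have "\<dots> \<le> expectation (\<lambda>\<omega>. \<bar>f (Y n \<omega>) - f (Z \<omega>)\<bar>)"
      using integral_norm_bound[of M "\<lambda>\<omega>. f (Y n \<omega>) - f (Z \<omega>)"] by simp
    also have "\<dots> \<le> expectation (\<lambda>\<omega>. \<epsilon>/2 + C * (Y n \<omega> - Z \<omega>)\<^sup>2)"
      using Y_in Z_in int_Y int_f[OF Z Z_in] int_sq
      by (intro integral_mono_AE) (auto elim!: AE_mp intro: modulus)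
    also have "\<dots> = \<epsilon>/2 + C * expectation (\<lambda>\<omega>. (Y n \<omega> - Z \<omega>)\<^sup>2)"
      using int_sq by (simp add: prob_space)
    finally show ?case using elim by linarith
  qed
qed

section \<open>The sign walk\<close>

fun eta_of :: "real + nat \<Rightarrow> real" where
  "eta_of (Inl x) = x"
| "eta_of (Inr _) = 0"

fun K_of :: "real + nat \<Rightarrow> nat" where
  "K_of (Inr k) = k"
| "K_of (Inl _) = 0"

text \<open>sign_walk k y is X_k / X_1 computed from the inputs y, indexed as in erw_hyps
  (Inl n for \<eta>_n, Inr n for K_n) and assuming K_k \<in> {1, k - 1}. The sgn keeps it in [-1, 1]
  also on the null set where some \<eta>_k \<notin> {-1, 0, 1}.\<close>

fun sign_walk :: "nat \<Rightarrow> (nat + nat \<Rightarrow> real + nat) \<Rightarrow> real" where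
  "sign_walk 0 y = 1"
| "sign_walk (Suc n) y =
     (if n = 0 then 1
      else sgn (eta_of (y (Inl (Suc n)))) *
        (if n = 1 \<or> K_of (y (Inr (Suc n))) = 1 then 1 else sign_walk n y))"

declare sign_walk.simps(2) [simp del]

definition walk_coords :: "nat \<Rightarrow> (nat + nat) set" where
  "walk_coords k = Inl ` {2..k} \<union> Inr ` {3..k}"

lemma walk_coords_mono: "k \<le> n \<Longrightarrow> walk_coords k \<subseteq> walk_coords n"
  unfolding walk_coords_def by auto

lemma abs_sign_walk_le: "\<bar>sign_walk k y\<bar> \<le> 1"
proof (induction k)
  case (Suc n)
  then show ?case
    by (simp add: sign_walk.simps(2) abs_mult abs_sgn_eq mult_le_one)
qed simp

lemma sign_walk_cong:
  "(\<And>i. i \<in> walk_coords k \<Longrightarrow> y i = y' i) \<Longrightarrow> sign_walk k y = sign_walk k y'"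
proof (induction k)
  case (Suc n)
  have "sign_walk n y = sign_walk n y'"
    using Suc walk_coords_mono[of n "Suc n"] by auto
  moreover have "n \<noteq> 0 \<Longrightarrow> y (Inl (Suc n)) = y' (Inl (Suc n))"
    "n > 1 \<Longrightarrow> y (Inr (Suc n)) = y' (Inr (Suc n))"
    using Suc.prems by (auto simp: walk_coords_def)
  ultimately show ?case
    by (auto simp: sign_walk.simps(2))
qed simp

lemma sign_walk_measurable:
  "walk_coords k \<subseteq> C \<Longrightarrow> sign_walk k \<in> borel_measurable (PiM C (\<lambda>_. count_space UNIV))"
proof (induction k)
  case (Suc n)
  have [measurable]: "eta_of \<in> borel_measurable (count_space UNIV)"
    "K_of \<in> measurable (count_space UNIV) (count_space UNIV)"
    by simp_all
  consider "n = 0" | "n = 1" | "n > 1" by linarith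
  then show ?case
  proof cases
    case 1
    then show ?thesis by (simp add: sign_walk.simps(2))
  next
    case 2
    then have [measurable]:
      "(\<lambda>y. y (Inl 2)) \<in> measurable (PiM C (\<lambda>_. count_space UNIV)) (count_space UNIV)"
      using Suc.prems by (intro measurable_component_singleton) (auto simp: walk_coords_def)
    have "sign_walk (Suc n) = (\<lambda>y. sgn (eta_of (y (Inl 2))))"
      using 2 by (simp add: fun_eq_iff sign_walk.simps(2) numeral_2_eq_2)
    then show ?thesis by simp
  next
    case 3
    then have [measurable]:
      "(\<lambda>y. y (Inl (Suc n))) \<in> measurable (PiM C (\<lambda>_. count_space UNIV)) (count_space UNIV)"
      "(\<lambda>y. y (Inr (Suc n))) \<in> measurable (PiM C (\<lambda>_. count_space UNIV)) (count_space UNIV)"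
      using Suc.prems by (auto intro!: measurable_component_singleton simp: walk_coords_def)
    have [measurable]: "sign_walk n \<in> borel_measurable (PiM C (\<lambda>_. count_space UNIV))"
      using Suc walk_coords_mono[of n "Suc n"] by auto
    show ?thesis
      using 3 by (simp add: sign_walk.simps(2)[abs_def])
  qed
qed (simp add: sign_walk.simps(1)[abs_def])

locale erw =
  fixes M :: "'a measure" and p q r :: real
    and X1 :: "'a \<Rightarrow> real" and eta :: "nat \<Rightarrow> 'a \<Rightarrow> real" and K :: "nat \<Rightarrow> 'a \<Rightarrow> nat"
  assumes hyps: "erw_hyps M p q r X1 eta K" and total: "p + q + r = 1"

sublocale erw \<subseteq> prob_space M
  using hyps by (simp add: erw_hyps_def)

context erw
begin

definition input :: "nat + nat \<Rightarrow> 'a \<Rightarrow> real + nat" where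
  "input i \<omega> = (case i of Inl n \<Rightarrow> Inl (if n = 1 then X1 \<omega> else eta n \<omega>) | Inr n \<Rightarrow> Inr (K n \<omega>))"

definition input_index :: "(nat + nat) set" where
  "input_index = Inl ` {1..} \<union> Inr ` {3..}"

lemma indep_input: "indep_vars (\<lambda>_. count_space UNIV) input input_index"
  using hyps unfolding erw_hyps_def input_def[abs_def] input_index_def by blast

lemma X1_measurable [measurable]: "X1 \<in> measurable M (count_space UNIV)"
  and eta_measurable [measurable]: "2 \<le> n \<Longrightarrow> eta n \<in> measurable M (count_space UNIV)"
  and K_measurable [measurable]: "3 \<le> n \<Longrightarrow> K n \<in> measurable M (count_space UNIV)"
  using hyps by (simp_all add: erw_hyps_def)

lemma X1_borel_measurable [measurable]: "X1 \<in> borel_measurable M"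
  and eta_borel_measurable [measurable]: "2 \<le> n \<Longrightarrow> eta n \<in> borel_measurable M"
  by (auto intro: measurable_compose[OF X1_measurable] measurable_compose[OF eta_measurable])

lemma prob_X1:
  "prob {\<omega>\<in>space M. X1 \<omega> = 1} = p" "prob {\<omega>\<in>space M. X1 \<omega> = -1} = q"
  "prob {\<omega>\<in>space M. X1 \<omega> = 0} = r"
  using hyps by (simp_all add: erw_hyps_def)

lemma prob_eta:
  assumes "2 \<le> n"
  shows "prob {\<omega>\<in>space M. eta n \<omega> = 1} = p" "prob {\<omega>\<in>space M. eta n \<omega> = -1} = q"
    "prob {\<omega>\<in>space M. eta n \<omega> = 0} = r"
  using hyps assms by (simp_all add: erw_hyps_def)

lemma prob_K:
  assumes "3 \<le> n"
  shows "prob {\<omega>\<in>space M. K n \<omega> = 1} = 1/2" "prob {\<omega>\<in>space M. K n \<omega> = n - 1} = 1/2"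
proof -
  from assms obtain m where "2 \<le> m" "n = m + 1"
    by (intro that[of "n - 1"]) auto
  then show "prob {\<omega>\<in>space M. K n \<omega> = 1} = 1/2" "prob {\<omega>\<in>space M. K n \<omega> = n - 1} = 1/2"
    using hyps by (simp_all add: erw_hyps_def)
qed

lemma AE_X1: "AE \<omega> in M. X1 \<omega> \<in> {1, -1, 0}"
  by (rule AE_in_finite_values) (use total in \<open>simp_all add: prob_X1\<close>)

lemma AE_eta: "AE \<omega> in M. \<forall>n\<ge>2. eta n \<omega> \<in> {1, -1, 0}"
proof (subst AE_all_countable, intro allI)
  fix n :: nat
  show "AE \<omega> in M. 2 \<le> n \<longrightarrow> eta n \<omega> \<in> {1, -1, 0}"
  proof (cases "2 \<le> n")
    case True
    have "AE \<omega> in M. eta n \<omega> \<in> {1, -1, 0}"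
      using True total by (intro AE_in_finite_values) (simp_all add: prob_eta)
    then show ?thesis by simp
  qed simp
qed

lemma AE_K: "AE \<omega> in M. \<forall>n\<ge>3. K n \<omega> \<in> {1, n - 1}"
proof (subst AE_all_countable, intro allI)
  fix n :: nat
  show "AE \<omega> in M. 3 \<le> n \<longrightarrow> K n \<omega> \<in> {1, n - 1}"
  proof (cases "3 \<le> n")
    case True
    have "(\<Sum>a\<in>{1, n - 1}. prob {\<omega>\<in>space M. K n \<omega> = a}) = 1"
      using True prob_K[OF True] by (subst sum.insert) auto
    then have "AE \<omega> in M. K n \<omega> \<in> {1, n - 1}"
      by (intro AE_in_finite_values K_measurable True) simp
    then show ?thesis by simp
  qed simp
qed

definition mu :: real where "mu = p - q"

definition c :: real where "c = mu / (2 - mu)"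

lemma weights_nonneg: "0 \<le> p" "0 \<le> q" "0 \<le> r"
  unfolding prob_X1[symmetric] by (rule measure_nonneg)+

lemma abs_mu_le: "\<bar>mu\<bar> \<le> 1"
  using weights_nonneg total by (simp add: mu_def)

lemma c_fixed_point: "c = mu / 2 * (1 + c)"
  using abs_mu_le by (simp add: c_def field_simps)

lemma abs_c_le: "\<bar>c\<bar> \<le> 1"
proof -
  have "1 \<le> 2 - mu"
    using abs_mu_le by linarith
  then have "\<bar>c\<bar> = \<bar>mu\<bar> / (2 - mu)"
    by (simp add: c_def abs_divide)
  also have "\<dots> \<le> 1"
    using \<open>1 \<le> 2 - mu\<close> abs_mu_le by (simp add: divide_le_eq_1)
  finally show ?thesis .
qed

lemma expectation_sgn_eta:
  assumes "2 \<le> n"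
  shows "expectation (\<lambda>\<omega>. sgn (eta n \<omega>)) = mu"
proof -
  have "AE \<omega> in M. eta n \<omega> \<in> {1, -1, 0}"
    using AE_eta by eventually_elim (use assms in simp)
  then show ?thesis
    using assms by (subst expectation_finite_values[where X="eta n" and A="{1, -1, 0}"])
      (simp_all add: prob_eta mu_def)
qed

lemma expectation_K_choice:
  fixes a b :: real
  assumes "3 \<le> n"
  shows "expectation (\<lambda>\<omega>. if K n \<omega> = 1 then a else b) = (a + b) / 2"
proof -
  have "AE \<omega> in M. K n \<omega> \<in> {1, n - 1}"
    using AE_K by eventually_elim (use assms in simp)
  then have "expectation (\<lambda>\<omega>. if K n \<omega> = 1 then a else b) =
      (\<Sum>x\<in>{1, n - 1}. (if x = 1 then a else b) * prob {\<omega>\<in>space M. K n \<omega> = x})"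
    using assms by (intro expectation_finite_values K_measurable) auto
  also have "\<dots> = a * prob {\<omega>\<in>space M. K n \<omega> = 1} + b * prob {\<omega>\<in>space M. K n \<omega> = n - 1}"
    using assms by (subst sum.insert) auto
  also have "\<dots> = (a + b) / 2"
    unfolding prob_K[OF assms] by simp
  finally show ?thesis .
qed

lemma input_measurable: "i \<in> input_index \<Longrightarrow> input i \<in> measurable M (count_space UNIV)"
  using indep_input unfolding indep_vars_def by blast

lemma input_Inl: "2 \<le> n \<Longrightarrow> input (Inl n) \<omega> = Inl (eta n \<omega>)"
  and input_Inr: "input (Inr n) \<omega> = Inr (K n \<omega>)"
  by (simp_all add: input_def)

lemma restrict_input_measurable:
  "A \<subseteq> input_index \<Longrightarrow>
    (\<lambda>\<omega>. restrict (\<lambda>i. input i \<omega>) A) \<in> measurable M (PiM A (\<lambda>_. count_space UNIV))"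
  by (intro measurable_restrict input_measurable) auto

lemma expectation_mult_inputs:
  assumes AB: "A \<inter> B = {}" "A \<subseteq> input_index" "B \<subseteq> input_index"
    and f: "bounded_rv (PiM A (\<lambda>_. count_space UNIV)) f"
    and g: "bounded_rv (PiM B (\<lambda>_. count_space UNIV)) g"
  shows "expectation (\<lambda>\<omega>. f (restrict (\<lambda>i. input i \<omega>) A) * g (restrict (\<lambda>i. input i \<omega>) B)) =
    expectation (\<lambda>\<omega>. f (restrict (\<lambda>i. input i \<omega>) A)) *
    expectation (\<lambda>\<omega>. g (restrict (\<lambda>i. input i \<omega>) B))"
proof (rule expectation_mult_indep_restrict[OF indep_input AB])
  show "integrable M (\<lambda>\<omega>. f (restrict (\<lambda>i. input i \<omega>) A))"
    by (rule integrable_bounded_rv,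
        rule bounded_rv_compose[OF f restrict_input_measurable[OF AB(2)]])
  show "integrable M (\<lambda>\<omega>. g (restrict (\<lambda>i. input i \<omega>) B))"
    by (rule integrable_bounded_rv,
        rule bounded_rv_compose[OF g restrict_input_measurable[OF AB(3)]])
qed (use f g in \<open>simp_all add: bounded_rv_def\<close>)

definition history :: "nat \<Rightarrow> 'a \<Rightarrow> nat + nat \<Rightarrow> real + nat" where
  "history n \<omega> = restrict (\<lambda>i. input i \<omega>) (walk_coords n)"

lemma walk_coords_subset_input_index: "walk_coords n \<subseteq> input_index"
  unfolding walk_coords_def input_index_def by auto

lemma bounded_rv_history:
  "bounded_rv (PiM (walk_coords n) (\<lambda>_. count_space UNIV)) \<phi> \<Longrightarrow> bounded_rv M (\<lambda>\<omega>. \<phi> (history n \<omega>))"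
  unfolding history_def
  by (erule bounded_rv_compose, intro restrict_input_measurable walk_coords_subset_input_index)

definition W :: "nat \<Rightarrow> 'a \<Rightarrow> real" where
  "W k \<omega> = sign_walk k (\<lambda>i. input i \<omega>)"

lemma W_eq_history: "k \<le> n \<Longrightarrow> W k \<omega> = sign_walk k (history n \<omega>)"
  unfolding W_def history_def using walk_coords_mono by (intro sign_walk_cong) auto

lemma abs_W_le: "\<bar>W k \<omega>\<bar> \<le> 1"
  unfolding W_def by (rule abs_sign_walk_le)

lemma bounded_rv_W: "bounded_rv M (W k)"
proof -
  have "W k = (\<lambda>\<omega>. sign_walk k (history k \<omega>))"
    using W_eq_history by auto
  then show ?thesis
    by (simp add: bounded_rv_history
        bounded_rvI[OF sign_walk_measurable[OF subset_refl] abs_sign_walk_le])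
qed

lemma W_1: "W 1 \<omega> = 1"
  by (simp add: W_def sign_walk.simps(2))

lemma W_2: "W 2 \<omega> = sgn (eta 2 \<omega>)"
  using input_Inl[of 2] by (simp add: W_def numeral_2_eq_2 sign_walk.simps(2))

lemma W_step: "3 \<le> n \<Longrightarrow> W n \<omega> = sgn (eta n \<omega>) * (if K n \<omega> = 1 then 1 else W (n - 1) \<omega>)"
  by (cases n) (simp_all add: W_def input_Inl input_Inr sign_walk.simps(2))

lemma abs_W_sub_c_le: "\<bar>W k \<omega> - c\<bar> \<le> 2"
  using abs_W_le[of k \<omega>] abs_c_le by linarith

lemma erw_step_measurable: "erw_step X1 eta K n \<in> borel_measurable M"
proof (induction n rule: less_induct)
  case (less n)
  consider "n = 0" | "n = 1" | "n = 2" | "3 \<le> n" by linarith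
  then show ?case
  proof cases
    case 1
    then have "erw_step X1 eta K n = (\<lambda>_. 0)"
      by (intro ext, subst erw_step.simps) simp
    then show ?thesis by simp
  next
    case 2
    then have "erw_step X1 eta K n = X1"
      by (intro ext, subst erw_step.simps) simp
    then show ?thesis by (simp add: X1_borel_measurable)
  next
    case 3
    then have "erw_step X1 eta K n = (\<lambda>\<omega>. eta 2 \<omega> * X1 \<omega>)"
      by (intro ext, subst erw_step.simps) simp
    then show ?thesis by (simp add: X1_borel_measurable eta_borel_measurable)
  next
    case 4
    \<comment> \<open>the recursive call is at the random index K n, so spread it over the values of K n\<close>
    have "erw_step X1 eta K n \<omega> =
        eta n \<omega> * (\<Sum>j\<in>{1..<n}. if K n \<omega> = j then erw_step X1 eta K j \<omega> else 0)" for \<omega>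
      using 4 by (subst erw_step.simps) (simp add: sum.delta')
    then have eq: "erw_step X1 eta K n =
        (\<lambda>\<omega>. eta n \<omega> * (\<Sum>j\<in>{1..<n}. if K n \<omega> = j then erw_step X1 eta K j \<omega> else 0))"
      by auto
    show ?thesis
      unfolding eq using 4 less.IH
      by (intro borel_measurable_times borel_measurable_sum measurable_If
          measurable_compose[OF eta_measurable] measurable_sets_Collect[OF K_measurable]) auto
  qed
qed

lemma AE_erw_step_eq: "AE \<omega> in M. \<forall>n\<ge>1. erw_step X1 eta K n \<omega> = X1 \<omega> * W n \<omega>"
  using AE_eta AE_K
proof eventually_elim
  case (elim \<omega>)
  then have sgn_eta: "sgn (eta n \<omega>) = eta n \<omega>" if "2 \<le> n" for n
    using that by auto
  show ?case
  proof (intro allI impI)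
    fix n :: nat
    assume "1 \<le> n"
    then show "erw_step X1 eta K n \<omega> = X1 \<omega> * W n \<omega>"
    proof (induction n rule: less_induct)
      case (less n)
      consider "n = 1" | "n = 2" | "3 \<le> n"
        using less.prems by linarith
      then show ?case
      proof cases
        case 1
        then show ?thesis using W_1[of \<omega>] by (subst erw_step.simps) simp
      next
        case 2
        then show ?thesis by (subst erw_step.simps) (simp add: W_2 sgn_eta)
      next
        case 3
        then have "K n \<omega> = 1 \<or> K n \<omega> = n - 1"
          using elim(2) by auto
        moreover have "erw_step X1 eta K (n - 1) \<omega> = X1 \<omega> * W (n - 1) \<omega>"
          using 3 by (intro less.IH) auto
        moreover have "erw_step X1 eta K 1 \<omega> = X1 \<omega>"
          by (subst erw_step.simps) simp
        ultimately show ?thesis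
          using 3 by (subst erw_step.simps) (auto simp: W_step sgn_eta)
      qed
    qed
  qed
qed

section \<open>The drift of the sign walk\<close>

lemma expectation_step_history:
  fixes a b :: real
  assumes n: "3 \<le> n" and \<phi>: "bounded_rv (PiM (walk_coords (n - 1)) (\<lambda>_. count_space UNIV)) \<phi>"
  shows "expectation (\<lambda>\<omega>. sgn (eta n \<omega>) * ((if K n \<omega> = 1 then a else b) * \<phi> (history (n - 1) \<omega>))) =
    mu * ((a + b) / 2) * expectation (\<lambda>\<omega>. \<phi> (history (n - 1) \<omega>))"
proof -
  let ?past = "walk_coords (n - 1)"
  have coords: "{Inl n} \<subseteq> input_index" "insert (Inr n) ?past \<subseteq> input_index" "{Inr n} \<subseteq> input_index"
    "{Inl n} \<inter> insert (Inr n) ?past = {}" "{Inr n} \<inter> ?past = {}"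
    using n walk_coords_subset_input_index by (auto simp: input_index_def walk_coords_def)
  have choice:
    "bounded_rv (PiM A (\<lambda>_. count_space UNIV)) (\<lambda>v. if K_of (v (Inr n)) = 1 then a else b)"
    if "Inr n \<in> A" for A
    using bounded_rv_component[where h="\<lambda>x. if K_of x = 1 then a else b" and C="\<bar>a\<bar> + \<bar>b\<bar>", OF that]
    by simp
  have sign: "bounded_rv (PiM {Inl n} (\<lambda>_. count_space UNIV)) (\<lambda>v. sgn (eta_of (v (Inl n))))"
    by (rule bounded_rv_component[where C=1]) (simp_all add: abs_sgn_eq)
  have past:
    "bounded_rv (PiM (insert (Inr n) ?past) (\<lambda>_. count_space UNIV)) (\<lambda>v. \<phi> (restrict v ?past))"
    using \<phi> unfolding bounded_rv_def
    by (auto intro: measurable_compose[OF measurable_restrict_subset])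
  have "expectation (\<lambda>\<omega>. (if K n \<omega> = 1 then a else b) * \<phi> (history (n - 1) \<omega>)) =
      expectation (\<lambda>\<omega>. (if K n \<omega> = 1 then a else b)) * expectation (\<lambda>\<omega>. \<phi> (history (n - 1) \<omega>))"
    using expectation_mult_inputs[OF coords(5,3) walk_coords_subset_input_index choice \<phi>]
    by (simp add: input_Inr history_def)
  moreover have "expectation (\<lambda>\<omega>. sgn (eta n \<omega>) *
        ((if K n \<omega> = 1 then a else b) * \<phi> (history (n - 1) \<omega>))) =
      expectation (\<lambda>\<omega>. sgn (eta n \<omega>)) *
      expectation (\<lambda>\<omega>. (if K n \<omega> = 1 then a else b) * \<phi> (history (n - 1) \<omega>))"
    using expectation_mult_inputs[OF coords(4,1,2) sign bounded_rv_mult[OF choice past]] n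
    by (simp add: input_Inl input_Inr history_def restrict_restrict Int_absorb1 subset_insertI)
  ultimately show ?thesis
    using expectation_sgn_eta[of n] expectation_K_choice[OF n, of a b] n by simp
qed

lemma bounded_rv_sgn_eta: "2 \<le> n \<Longrightarrow> bounded_rv M (\<lambda>\<omega>. sgn (eta n \<omega>))"
  by (intro bounded_rvI[where B=1] measurable_compose[OF eta_measurable]) (auto simp: abs_sgn_eq)

lemma bounded_rv_K_choice: "3 \<le> n \<Longrightarrow> bounded_rv M (\<lambda>\<omega>. if K n \<omega> = 1 then a else b)"
  by (intro bounded_rvI[where B="\<bar>a\<bar> + \<bar>b\<bar>"] measurable_compose[OF K_measurable]) auto

text \<open>This is E[W_n | history] = \<mu>/2 (1 + W_(n-1)), tested against bounded functions of the
  history.\<close>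

lemma expectation_history_mult_W:
  assumes n: "3 \<le> n" and \<phi>: "bounded_rv (PiM (walk_coords (n - 1)) (\<lambda>_. count_space UNIV)) \<phi>"
  shows "expectation (\<lambda>\<omega>. \<phi> (history (n - 1) \<omega>) * W n \<omega>) =
    mu / 2 * (expectation (\<lambda>\<omega>. \<phi> (history (n - 1) \<omega>)) +
      expectation (\<lambda>\<omega>. \<phi> (history (n - 1) \<omega>) * W (n - 1) \<omega>))"
proof -
  let ?\<phi> = "\<lambda>\<omega>. \<phi> (history (n - 1) \<omega>)" and ?\<psi> = "\<lambda>v. \<phi> v * sign_walk (n - 1) v"
  have \<psi>: "bounded_rv (PiM (walk_coords (n - 1)) (\<lambda>_. count_space UNIV)) ?\<psi>"
    by (intro bounded_rv_mult \<phi>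
        bounded_rvI[OF sign_walk_measurable[OF subset_refl] abs_sign_walk_le])
  have \<psi>_history: "?\<psi> (history (n - 1) \<omega>) = ?\<phi> \<omega> * W (n - 1) \<omega>" for \<omega>
    by (simp add: W_eq_history[OF order_refl])
  let ?A = "\<lambda>\<omega>. sgn (eta n \<omega>) * ((if K n \<omega> = 1 then 1 else 0) * ?\<phi> \<omega>)"
    and ?B = "\<lambda>\<omega>. sgn (eta n \<omega>) * ((if K n \<omega> = 1 then 0 else 1) * ?\<psi> (history (n - 1) \<omega>))"
  have split: "(\<lambda>\<omega>. ?\<phi> \<omega> * W n \<omega>) = (\<lambda>\<omega>. ?A \<omega> + ?B \<omega>)"
    unfolding \<psi>_history W_step[OF n] by auto
  have "integrable M ?A" "integrable M ?B"
    using n by (intro integrable_bounded_rv bounded_rv_mult bounded_rv_sgn_eta bounded_rv_K_choice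
        bounded_rv_history \<phi> \<psi>; simp)+
  then have "expectation (\<lambda>\<omega>. ?\<phi> \<omega> * W n \<omega>) = expectation ?A + expectation ?B"
    unfolding split by (rule Bochner_Integration.integral_add)
  also have "\<dots> = mu / 2 * (expectation ?\<phi> + expectation (\<lambda>\<omega>. ?\<phi> \<omega> * W (n - 1) \<omega>))"
    using expectation_step_history[OF n \<phi>, of 1 0] expectation_step_history[OF n \<psi>, of 0 1]
    unfolding \<psi>_history by (simp add: algebra_simps)
  finally show ?thesis .
qed

lemma expectation_history_mult_W_sub_c:
  assumes n: "3 \<le> n" and \<phi>: "bounded_rv (PiM (walk_coords (n - 1)) (\<lambda>_. count_space UNIV)) \<phi>"
  shows "expectation (\<lambda>\<omega>. \<phi> (history (n - 1) \<omega>) * (W n \<omega> - c)) =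
    mu / 2 * expectation (\<lambda>\<omega>. \<phi> (history (n - 1) \<omega>) * (W (n - 1) \<omega> - c))"
proof -
  let ?\<phi> = "\<lambda>\<omega>. \<phi> (history (n - 1) \<omega>)"
  have int: "integrable M ?\<phi>" "integrable M (\<lambda>\<omega>. ?\<phi> \<omega> * W k \<omega>)" for k
    by (intro integrable_bounded_rv bounded_rv_mult bounded_rv_history \<phi> bounded_rv_W)+
  have fixed_point: "mu / 2 - c = - (mu / 2) * c"
    using c_fixed_point by (simp add: field_simps)
  have "expectation (\<lambda>\<omega>. ?\<phi> \<omega> * (W n \<omega> - c)) =
      expectation (\<lambda>\<omega>. ?\<phi> \<omega> * W n \<omega>) - c * expectation ?\<phi>"
    using int by (simp add: right_diff_distrib mult.commute[of _ c])
  also have "\<dots> = mu / 2 * expectation (\<lambda>\<omega>. ?\<phi> \<omega> * W (n - 1) \<omega>) + (mu / 2 - c) * expectation ?\<phi>"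
    using expectation_history_mult_W[OF n \<phi>] by (simp add: algebra_simps)
  also have "\<dots> = mu / 2 * expectation (\<lambda>\<omega>. ?\<phi> \<omega> * (W (n - 1) \<omega> - c))"
    using int by (simp add: fixed_point right_diff_distrib algebra_simps)
  finally show ?thesis .
qed

section \<open>Second moments\<close>

definition R :: "nat \<Rightarrow> 'a \<Rightarrow> real" where
  "R m \<omega> = (\<Sum>k=1..m. W k \<omega> - c)"

lemma R_Suc: "R (Suc m) \<omega> = R m \<omega> + (W (Suc m) \<omega> - c)"
  by (simp add: R_def)

lemma abs_R_le: "\<bar>R m \<omega>\<bar> \<le> 2 * m"
proof -
  have "\<bar>R m \<omega>\<bar> \<le> (\<Sum>k=1..m. \<bar>W k \<omega> - c\<bar>)"
    unfolding R_def by (rule sum_abs)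
  also have "\<dots> \<le> (\<Sum>k=1..m. 2)"
    by (intro sum_mono abs_W_sub_c_le)
  finally show ?thesis by simp
qed

lemma bounded_rv_R: "bounded_rv M (R m)"
  unfolding R_def[abs_def] by (intro bounded_rv_intros bounded_rv_W)

lemma R_eq_history: "R m \<omega> = (\<Sum>k=1..m. sign_walk k (history m \<omega>) - c)"
  unfolding R_def by (intro sum.cong refl arg_cong2[where f="(-)"] W_eq_history) auto

lemma expectation_R_mult_W_Suc:
  assumes "1 \<le> m"
  shows "expectation (\<lambda>\<omega>. R (Suc m) \<omega> * (W (Suc (Suc m)) \<omega> - c)) =
    mu / 2 * (expectation (\<lambda>\<omega>. R m \<omega> * (W (Suc m) \<omega> - c)) + expectation (\<lambda>\<omega>. (W (Suc m) \<omega> - c)\<^sup>2))"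
proof -
  let ?\<phi> = "\<lambda>v. \<Sum>k=1..Suc m. sign_walk k v - c"
  have \<phi>: "bounded_rv (PiM (walk_coords (Suc m)) (\<lambda>_. count_space UNIV)) ?\<phi>"
    by (intro bounded_rv_intros bounded_rvI[OF sign_walk_measurable abs_sign_walk_le]
        walk_coords_mono) simp
  have "expectation (\<lambda>\<omega>. R (Suc m) \<omega> * (W (Suc (Suc m)) \<omega> - c)) =
      mu / 2 * expectation (\<lambda>\<omega>. R (Suc m) \<omega> * (W (Suc m) \<omega> - c))"
    using expectation_history_mult_W_sub_c[of "Suc (Suc m)" ?\<phi>] \<phi> assms by (simp add: R_eq_history)
  also have "expectation (\<lambda>\<omega>. R (Suc m) \<omega> * (W (Suc m) \<omega> - c)) =
      expectation (\<lambda>\<omega>. R m \<omega> * (W (Suc m) \<omega> - c)) + expectation (\<lambda>\<omega>. (W (Suc m) \<omega> - c)\<^sup>2)"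
    unfolding R_Suc distrib_right power2_eq_square
    by (intro Bochner_Integration.integral_add integrable_bounded_rv bounded_rv_intros
        bounded_rv_R bounded_rv_W)
  finally show ?thesis .
qed

lemma expectation_W_sub_c_squared_le: "expectation (\<lambda>\<omega>. (W k \<omega> - c)\<^sup>2) \<le> 4"
proof -
  have "\<bar>W k \<omega> - c\<bar>\<^sup>2 \<le> 2\<^sup>2" for \<omega>
    using abs_W_sub_c_le[of k \<omega>] by (intro power_mono) auto
  then have "\<bar>expectation (\<lambda>\<omega>. (W k \<omega> - c)\<^sup>2)\<bar> \<le> 4"
    by (intro abs_expectation_le bounded_rv_intros bounded_rv_W) simp
  then show ?thesis by simp
qed

lemma abs_expectation_R_mult_W_le: "\<bar>expectation (\<lambda>\<omega>. R m \<omega> * (W (Suc m) \<omega> - c))\<bar> \<le> 4"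
  \<comment> \<open>the factor |\<mu>/2| \<le> 1/2 turns the bound 4 + 4 back into 4\<close>
proof (induction m)
  case 0
  then show ?case by (simp add: R_def)
next
  case (Suc m)
  show ?case
  proof (cases "m = 0")
    case True
    have "\<bar>R 1 \<omega> * (W 2 \<omega> - c)\<bar> \<le> 2 * 2" for \<omega>
      unfolding abs_mult using abs_R_le[of 1 \<omega>] abs_W_sub_c_le[of 2 \<omega>] by (intro mult_mono) auto
    with True show ?thesis
      by (intro abs_expectation_le bounded_rv_intros bounded_rv_R bounded_rv_W)
        (auto simp: numeral_2_eq_2)
  next
    case False
    have "0 \<le> expectation (\<lambda>\<omega>. (W (Suc m) \<omega> - c)\<^sup>2)"
      by (rule integral_nonneg_AE) simp
    then have sum_le: "\<bar>expectation (\<lambda>\<omega>. R m \<omega> * (W (Suc m) \<omega> - c)) +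
        expectation (\<lambda>\<omega>. (W (Suc m) \<omega> - c)\<^sup>2)\<bar> \<le> 8"
      using Suc.IH expectation_W_sub_c_squared_le[of "Suc m"] unfolding abs_le_iff by linarith
    show ?thesis
      using False mult_mono[OF abs_mu_le sum_le zero_le_one abs_ge_zero]
      by (simp add: expectation_R_mult_W_Suc abs_mult)
  qed
qed

lemma expectation_R_squared_le: "expectation (\<lambda>\<omega>. (R m \<omega>)\<^sup>2) \<le> 12 * real m"
proof (induction m)
  case (Suc m)
  let ?D = "\<lambda>\<omega>. W (Suc m) \<omega> - c"
  have int: "integrable M (\<lambda>\<omega>. (R m \<omega>)\<^sup>2)" "integrable M (\<lambda>\<omega>. R m \<omega> * ?D \<omega>)"
      "integrable M (\<lambda>\<omega>. (?D \<omega>)\<^sup>2)"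
    by (intro integrable_bounded_rv bounded_rv_intros bounded_rv_R bounded_rv_W)+
  have "(R (Suc m) \<omega>)\<^sup>2 = (R m \<omega>)\<^sup>2 + 2 * (R m \<omega> * ?D \<omega>) + (?D \<omega>)\<^sup>2" for \<omega>
    by (simp add: R_Suc power2_eq_square algebra_simps)
  then have "expectation (\<lambda>\<omega>. (R (Suc m) \<omega>)\<^sup>2) = expectation (\<lambda>\<omega>. (R m \<omega>)\<^sup>2)
      + 2 * expectation (\<lambda>\<omega>. R m \<omega> * ?D \<omega>) + expectation (\<lambda>\<omega>. (?D \<omega>)\<^sup>2)"
    using int by simp
  then show ?case
    using Suc.IH abs_expectation_R_mult_W_le[of m] expectation_W_sub_c_squared_le[of "Suc m"]
    by simp
qed (simp add: R_def)

lemma sum_W_eq: "(\<Sum>k=1..n. W k \<omega>) = R n \<omega> + n * c"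
  by (simp add: R_def sum_subtractf)

lemma AE_erw_sum_eq: "AE \<omega> in M. \<forall>n. erw_sum X1 eta K n \<omega> = X1 \<omega> * (R n \<omega> + n * c)"
  using AE_erw_step_eq
proof eventually_elim
  case (elim \<omega>)
  show ?case
  proof
    fix n
    have "erw_sum X1 eta K n \<omega> = (\<Sum>k=1..n. X1 \<omega> * W k \<omega>)"
      unfolding erw_sum_def using elim by (intro sum.cong) auto
    then show "erw_sum X1 eta K n \<omega> = X1 \<omega> * (R n \<omega> + n * c)"
      using sum_W_eq[where n=n and \<omega>=\<omega>] by (simp add: sum_distrib_left[symmetric])
  qed
qed

lemma scaled_erw_sum_measurable: "(\<lambda>\<omega>. erw_sum X1 eta K n \<omega> / n) \<in> borel_measurable M"
  unfolding erw_sum_def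
  by (intro borel_measurable_divide borel_measurable_sum erw_step_measurable) simp

lemma AE_abs_scaled_erw_sum_le: "AE \<omega> in M. \<forall>n. \<bar>erw_sum X1 eta K n \<omega> / n\<bar> \<le> 1"
  using AE_erw_sum_eq AE_X1
proof eventually_elim
  case (elim \<omega>)
  show ?case
  proof
    fix n
    have "\<bar>R n \<omega> + n * c\<bar> \<le> (\<Sum>k=1..n. \<bar>W k \<omega>\<bar>)"
      unfolding sum_W_eq[symmetric] by (rule sum_abs)
    also have "\<dots> \<le> n"
      using sum_mono[of "{1..n}" "\<lambda>k. \<bar>W k \<omega>\<bar>" "\<lambda>_. 1"] abs_W_le by simp
    finally have "\<bar>X1 \<omega> * (R n \<omega> + n * c)\<bar> \<le> 1 * real n"
      using elim(2) unfolding abs_mult by (intro mult_mono) auto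
    then show "\<bar>erw_sum X1 eta K n \<omega> / n\<bar> \<le> 1"
      using elim(1) by (cases "n = 0") (simp_all add: abs_divide divide_le_eq_1)
  qed
qed

lemma expectation_scaled_erw_sum_deviation_le:
  assumes "1 \<le> n"
  shows "expectation (\<lambda>\<omega>. (erw_sum X1 eta K n \<omega> / n - c * X1 \<omega>)\<^sup>2) \<le> 12 / n"
proof -
  have "expectation (\<lambda>\<omega>. (erw_sum X1 eta K n \<omega> / n - c * X1 \<omega>)\<^sup>2) \<le>
      expectation (\<lambda>\<omega>. (R n \<omega>)\<^sup>2 / (real n)\<^sup>2)"
  proof (rule integral_mono_AE)
    show "integrable M (\<lambda>\<omega>. (erw_sum X1 eta K n \<omega> / n - c * X1 \<omega>)\<^sup>2)"
    proof (rule integrable_const_bound[where B=4])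
      show "AE \<omega> in M. norm ((erw_sum X1 eta K n \<omega> / n - c * X1 \<omega>)\<^sup>2) \<le> 4"
        using AE_abs_scaled_erw_sum_le AE_X1
      proof eventually_elim
        case (elim \<omega>)
        then have "\<bar>erw_sum X1 eta K n \<omega> / n\<bar> \<le> 1" "\<bar>c * X1 \<omega>\<bar> \<le> 1"
          using abs_c_le by (auto simp: abs_mult)
        then have "\<bar>erw_sum X1 eta K n \<omega> / n - c * X1 \<omega>\<bar> \<le> 2"
          using abs_triangle_ineq4[of "erw_sum X1 eta K n \<omega> / n" "c * X1 \<omega>"] by linarith
        then have "\<bar>erw_sum X1 eta K n \<omega> / n - c * X1 \<omega>\<bar>\<^sup>2 \<le> 2\<^sup>2"
          by (intro power_mono) auto
        then show ?case by simp
      qed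
    qed (use scaled_erw_sum_measurable in measurable)
    show "integrable M (\<lambda>\<omega>. (R n \<omega>)\<^sup>2 / (real n)\<^sup>2)"
      by (intro Bochner_Integration.integrable_divide integrable_bounded_rv bounded_rv_intros
          bounded_rv_R)
    show "AE \<omega> in M. (erw_sum X1 eta K n \<omega> / n - c * X1 \<omega>)\<^sup>2 \<le> (R n \<omega>)\<^sup>2 / (real n)\<^sup>2"
      using AE_erw_sum_eq AE_X1
    proof eventually_elim
      case (elim \<omega>)
      then have "(erw_sum X1 eta K n \<omega> / n - c * X1 \<omega>)\<^sup>2 = (X1 \<omega>)\<^sup>2 * ((R n \<omega>)\<^sup>2 / (real n)\<^sup>2)"
        using assms by (simp add: field_simps power2_eq_square)
      also have "\<dots> \<le> (R n \<omega>)\<^sup>2 / (real n)\<^sup>2"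
        using elim(2) by (auto simp: power2_eq_square)
      finally show ?case .
    qed
  qed
  also have "\<dots> = expectation (\<lambda>\<omega>. (R n \<omega>)\<^sup>2) / (real n)\<^sup>2"
    by simp
  also have "\<dots> \<le> 12 * real n / (real n)\<^sup>2"
    by (intro divide_right_mono expectation_R_squared_le) simp
  also have "\<dots> = 12 / n"
    by (simp add: power2_eq_square)
  finally show ?thesis .
qed

lemma tendsto_scaled_erw_sum_L2:
  "(\<lambda>n. expectation (\<lambda>\<omega>. (erw_sum X1 eta K n \<omega> / n - c * X1 \<omega>)\<^sup>2)) \<longlonglongrightarrow> 0"
proof (rule tendsto_sandwich[of "\<lambda>_. 0" _ _ "\<lambda>n. 12 / real n"])
  show "eventually (\<lambda>n. expectation (\<lambda>\<omega>. (erw_sum X1 eta K n \<omega> / n - c * X1 \<omega>)\<^sup>2) \<le> 12 / real n)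
      sequentially"
    using eventually_ge_at_top[of 1]
    by eventually_elim (rule expectation_scaled_erw_sum_deviation_le)
  show "(\<lambda>n. 12 / real n) \<longlonglongrightarrow> 0"
    by (rule lim_const_over_n)
qed (simp_all add: integral_nonneg_AE)

section \<open>Limits\<close>

lemma expectation_limit_law:
  "measure_pmf.expectation (erw_limit_pmf p q r) f = p * f c + r * f 0 + q * f (- c)"
proof -
  have "(p - q) / (2 + q - p) = c"
    by (simp add: c_def mu_def)
  moreover have "pmf_of_list_wf [(c, p), (0, r), (- c, q)]"
    using weights_nonneg total by (intro pmf_of_list_wfI) auto
  ultimately show ?thesis
    by (simp add: erw_limit_pmf_def integral_pmf_of_list)
qed

lemma expectation_c_X1: "expectation (\<lambda>\<omega>. f (c * X1 \<omega>)) = p * f c + r * f 0 + q * f (- c)"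
  using AE_X1
  by (subst expectation_finite_values[where X=X1 and A="{1, -1, 0}" and g="\<lambda>x. f (c * x)"])
    (simp_all add: prob_X1)

lemma tendsto_expectation_scaled_erw_sum:
  fixes f :: "real \<Rightarrow> real"
  assumes "continuous_on {-1..1} f" "f \<in> borel_measurable borel"
  shows "(\<lambda>n. expectation (\<lambda>\<omega>. f (erw_sum X1 eta K n \<omega> / n))) \<longlonglongrightarrow>
    measure_pmf.expectation (erw_limit_pmf p q r) f"
proof -
  have "AE \<omega> in M. \<forall>n. erw_sum X1 eta K n \<omega> / n \<in> {-1..1}"
    using AE_abs_scaled_erw_sum_le by eventually_elim (simp add: abs_le_iff del: abs_divide)
  moreover have "AE \<omega> in M. c * X1 \<omega> \<in> {-1..1}"
    using AE_X1 by eventually_elim (use abs_c_le in \<open>auto simp: abs_le_iff\<close>)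
  ultimately have "(\<lambda>n. expectation (\<lambda>\<omega>. f (erw_sum X1 eta K n \<omega> / n))) \<longlonglongrightarrow>
      expectation (\<lambda>\<omega>. f (c * X1 \<omega>))"
    by (intro tendsto_expectation_of_L2_convergence[where Y="\<lambda>n \<omega>. erw_sum X1 eta K n \<omega> / n"
          and Z="\<lambda>\<omega>. c * X1 \<omega>" and S="{-1..1}" and f=f,
          OF scaled_erw_sum_measurable _ compact_Icc _ _ tendsto_scaled_erw_sum_L2 assms]) simp_all
  then show ?thesis
    by (simp only: expectation_c_X1 expectation_limit_law)
qed

lemma weak_conv_scaled_erw_sum:
  "weak_conv_m (\<lambda>n. distr M borel (\<lambda>\<omega>. erw_sum X1 eta K n \<omega> / n))
     (distr (measure_pmf (erw_limit_pmf p q r)) borel (\<lambda>x. x))"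
proof (rule integral_bdd_continuous_conv_imp_weak_conv)
  show "real_distribution (distr M borel (\<lambda>\<omega>. erw_sum X1 eta K n \<omega> / n))" for n
    by (rule real_distribution_distr[OF scaled_erw_sum_measurable])
  show "real_distribution (distr (measure_pmf (erw_limit_pmf p q r)) borel (\<lambda>x. x))"
    by (rule prob_space.real_distribution_distr) (auto simp: measure_pmf.prob_space_axioms)
  fix f :: "real \<Rightarrow> real"
  assume "\<And>x. isCont f x"
  then have f: "continuous_on UNIV f"
    by (simp add: continuous_on_eq_continuous_at)
  then have f_measurable: "f \<in> borel_measurable borel"
    by (rule borel_measurable_continuous_onI)
  show "(\<lambda>n. integral\<^sup>L (distr M borel (\<lambda>\<omega>. erw_sum X1 eta K n \<omega> / n)) f) \<longlonglongrightarrow>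
      integral\<^sup>L (distr (measure_pmf (erw_limit_pmf p q r)) borel (\<lambda>x. x)) f"
    using tendsto_expectation_scaled_erw_sum[OF continuous_on_subset[OF f] f_measurable]
    by (simp add: integral_distr[OF scaled_erw_sum_measurable f_measurable]
        integral_distr[OF _ f_measurable])
qed

end

theorem theorem8p1:
  fixes M :: "'a measure" and p q r :: real
    and X1 :: "'a \<Rightarrow> real" and eta :: "nat \<Rightarrow> 'a \<Rightarrow> real" and K :: "nat \<Rightarrow> 'a \<Rightarrow> nat"
  assumes "p \<in> {0<..<1}" "q \<in> {0<..<1}" "r \<in> {0<..<1}" "p + q + r = 1"
    and "erw_hyps M p q r X1 eta K"
  shows "weak_conv_m (\<lambda>n. distr M borel (\<lambda>\<omega>. erw_sum X1 eta K n \<omega> / real n))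
           (distr (measure_pmf (erw_limit_pmf p q r)) borel (\<lambda>x. x)) \<and>
         (\<forall>\<alpha>::real. \<alpha> > 0 \<longrightarrow>
           (\<lambda>n. prob_space.expectation M (\<lambda>\<omega>. \<bar>erw_sum X1 eta K n \<omega> / real n\<bar> powr \<alpha>))
             \<longlonglongrightarrow> measure_pmf.expectation (erw_limit_pmf p q r) (\<lambda>x. \<bar>x\<bar> powr \<alpha>)) \<and>
         (\<forall>k::nat. k > 0 \<longrightarrow>
           (\<lambda>n. prob_space.expectation M (\<lambda>\<omega>. (erw_sum X1 eta K n \<omega> / real n) ^ k))
             \<longlonglongrightarrow> measure_pmf.expectation (erw_limit_pmf p q r) (\<lambda>x. x ^ k))"
proof -
  interpret erw M p q r X1 eta K
    using assms(4,5) by unfold_locales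
  have abs_powr: "continuous_on UNIV (\<lambda>x::real. \<bar>x\<bar> powr \<alpha>)" if "\<alpha> > 0" for \<alpha>
    using that by (intro continuous_on_powr' continuous_intros) auto
  have power: "continuous_on UNIV (\<lambda>x::real. x ^ k)" for k
    by (intro continuous_intros)
  show ?thesis
    by (intro conjI allI impI weak_conv_scaled_erw_sum tendsto_expectation_scaled_erw_sum
        continuous_on_subset[OF abs_powr] borel_measurable_continuous_onI[OF abs_powr]
        continuous_on_subset[OF power] borel_measurable_continuous_onI[OF power]) auto
qed

end
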